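(* Consider Algorithm iR2N (described in the context) and suppose (A1)–(A7) hold. Then there exist an infinite index set $N\subseteq\mathbb{N}$ and, for each $k\in N$, an exact Cauchy step $s_{k,\mathrm{cp}}\in\operatorname{argmin}_s m_{\mathrm{cp}}(s;x_k,\nu_k^{-1})$ such that: (i) $\{\hat s_{k,\mathrm{cp}}\}_{k\in N}\to0$ and $\{s_{k,\mathrm{cp}}\}_{k\in N}\to0$; (ii) $\{s_k\}_{k\in N}\to0$; (iii) there exist $u_k\in\nabla f(x_k)+\partial\psi(s_{k,\mathrm{cp}};x_k)$, $k\in N$, with $\{u_k\}_{k\in N}\to0$.
   Context: Setting. $f:\mathbb{R}^n\to\mathbb{R}$ is continuously differentiable, $h:\mathbb{R}^n\to\mathbb{R}\cup\{+\infty\}$ is proper and lower semicontinuous; the problem is $\min_x f(x)+h(x)$. $\|\cdot\|$ is the Euclidean norm (spectral norm for matrices). For each $x$, approximations $\hat f(x)\in\mathbb{R}$ of $f(x)$ and $\hat\nabla f(x)\in\mathbb{R}^n$ of $\nabla f(x)$ are available. For each $x$, $\psi(\cdot;x):\mathbb{R}^n\to\mathbb{R}\cup\{+\infty\}$ is proper, lsc, satisfies $\psi(0;x)=h(x)$ and $\partial\psi(0;x)\subseteq\partial h(x)$ ($\partial$ = limiting subdifferential), and is uniformly prox-bounded: there is $\lambda>0$ such that for every $x$ and every $0<\lambda'<\lambda$, $w\mapsto\psi(w;x)+\tfrac{1}{2\lambda'}\|w\|^2$ is bounded below. Models: $\varphi_{\mathrm{cp}}(s;x)=\hat f(x)+\hat\nabla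 f(x)^Ts$; $m_{\mathrm{cp}}(s;x,\nu^{-1})=\varphi_{\mathrm{cp}}(s;x)+\tfrac12\nu^{-1}\|s\|^2+\psi(s;x)$; for a symmetric $B(x)\in\mathbb{R}^{n\times n}$, $\varphi(s;x)=\hat f(x)+\hat\nabla f(x)^Ts+\tfrac12 s^TB(x)s$ and $m(s;x,\sigma)=\varphi(s;x)+\tfrac12\sigma\|s\|^2+\psi(s;x)$. Algorithm iR2N. Constants: $\kappa_f,\kappa_\nabla>0$, $0<\gamma_3\le 1<\gamma_1\le\gamma_2$, $0<\hat\eta_1\le\hat\eta_2<1$, $0<\theta_1<1<\theta_2$, $\sigma_{\min}>4\kappa_f\theta_1\theta_2^2/(\hat\eta_1(1-\theta_1))$, $\sigma_0\ge\sigma_{\min}$, $x_0\in\mathbb{R}^n$. At iteration $k=0,1,\dots$: choose symmetric $B_k=B(x_k)$; set $\nu_k=\theta_1/(\|B_k\|+\sigma_k)$; compute $\hat s_{k,\mathrm{cp}}$ with $m_{\mathrm{cp}}(\hat s_{k,\mathrm{cp}};x_k,\nu_k^{-1})\le m_{\mathrm{cp}}(0;x_k,\nu_k^{-1})$ (an approximate minimizer of $m_{\mathrm{cp}}(\cdot;x_k,\nu_k^{-1})$ obtained by a descent procedure from $s=0$) and set $\hat\xi_{k,\mathrm{cp}}=(\varphi_{\mathrm{cp}}+\psi)(0;x_k)-(\varphi_{\mathrm{cp}}+\psi)(\hat s_{k,\mathrm{cp}};x_k)$; compute $s_k$ with $m(s_k;x_k,\sigma_k)\le m(\hat s_{k,\mathrm{cp}};x_k,\sigma_k)$;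 if $\|s_k\|>\theta_2\|\hat s_{k,\mathrm{cp}}\|$, reset $s_k=\hat s_{k,\mathrm{cp}}$ (these computations are repeated with refined $\hat f,\hat\nabla f$ until (A6) holds). Compute $$\hat\rho_k=\frac{\hat f(x_k)+h(x_k)-\hat f(x_k+s_k)-h(x_k+s_k)}{\varphi(0;x_k)+\psi(0;x_k)-\varphi(s_k;x_k)-\psi(s_k;x_k)},$$ where $\varphi(\cdot;x_k)$ uses $B_k$. If $\hat\rho_k\ge\hat\eta_1$ set $x_{k+1}=x_k+s_k$, else $x_{k+1}=x_k$. Choose $\sigma_{k+1}\in[\gamma_3\sigma_k,\sigma_k]$ if $\hat\rho_k\ge\hat\eta_2$, $\sigma_{k+1}\in[\sigma_k,\gamma_1\sigma_k]$ if $\hat\eta_1\le\hat\rho_k<\hat\eta_2$, $\sigma_{k+1}\in[\gamma_1\sigma_k,\gamma_2\sigma_k]$ if $\hat\rho_k<\hat\eta_1$; then reset $\sigma_{k+1}=\max(\sigma_{k+1},\sigma_{\min})$. Assumptions. (A1) $|f(x+s)-f(x)-\nabla f(x)^Ts|\le\tfrac12L\|s\|^2$ for all $x,s$, for some $L\ge0$. (A2) $\|B_k\|\le\kappa_B$ for all $k$, for some $\kappa_B>0$. (A3) $|\psi(s;x)-h(x+s)|\le\kappa_h\|s\|^2$ for all $x,s$, for some $\kappa_h>0$. (A4) For all $k$, $\varphi(0;x_k)+\psi(0;x_k)-(\varphi(s_k;x_k)+\psi(s_k;x_k))\ge(1-\theta_1)\hat\xi_{k,\mathrm{cp}}$. (A5)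 There is $\kappa_s\in(0,1]$ such that for all $k$ the set $\operatorname{argmin}_s m_{\mathrm{cp}}(s;x_k,\nu_k^{-1})$ is nonempty and $\|\hat s_{k,\mathrm{cp}}\|\ge\kappa_s\min\{\|s\|\mid s\in\operatorname{argmin}_{s'} m_{\mathrm{cp}}(s';x_k,\nu_k^{-1})\}$. (A6) For all $k$: $|f(x_k)-\hat f(x_k)|\le\kappa_f\|s_k\|^2$, $|f(x_k+s_k)-\hat f(x_k+s_k)|\le\kappa_f\|s_k\|^2$, $\|\nabla f(x_k)-\hat\nabla f(x_k)\|\le\kappa_\nabla\|s_k\|$. (A7) There is $(f+h)_{\mathrm{low}}\in\mathbb{R}$ with $(f+h)(x)\ge(f+h)_{\mathrm{low}}$ for all $x$. *)

theory Defs
  imports "HOL-Analysis.Analysis" "HOL-Library.Extended_Real"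
begin

definition proper_fun :: "('a \<Rightarrow> ereal) \<Rightarrow> bool" where
  "proper_fun g \<longleftrightarrow> (\<forall>x. g x \<noteq> -\<infinity>) \<and> (\<exists>x. g x \<noteq> \<infinity>)"

definition lsc_fun :: "('a::topological_space \<Rightarrow> ereal) \<Rightarrow> bool" where
  "lsc_fun g \<longleftrightarrow> (\<forall>c::ereal. closed {x. g x \<le> c})"

definition frechet_subdiff :: "('a::real_inner \<Rightarrow> ereal) \<Rightarrow> 'a \<Rightarrow> 'a set" where
  "frechet_subdiff g x = {v. \<bar>g x\<bar> \<noteq> \<infinity> \<and>
     (\<forall>e>0. \<exists>d>0. \<forall>y. norm (y - x) < d \<longrightarrow>
        g x + ereal (inner v (y - x) - e * norm (y - x)) \<le> g y)}"

definition limiting_subdiff :: "('a::real_inner \<Rightarrow> ereal) \<Rightarrow> 'a \<Rightarrow> 'a set" where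
  "limiting_subdiff g x = {v. \<bar>g x\<bar> \<noteq> \<infinity> \<and>
     (\<exists>xs vs. xs \<longlonglongrightarrow> x \<and> (\<lambda>j. g (xs j)) \<longlonglongrightarrow> g x \<and>
        (\<forall>j. vs j \<in> frechet_subdiff g (xs j)) \<and> vs \<longlonglongrightarrow> v)}"

definition argmin_set :: "('a \<Rightarrow> ereal) \<Rightarrow> 'a set" where
  "argmin_set F = {s. \<forall>t. F s \<le> F t}"

definition spec_norm :: "real^'n^'n \<Rightarrow> real" where
  "spec_norm B = onorm (\<lambda>v. B *v v)"

definition phi_cp :: "real \<Rightarrow> real^'n \<Rightarrow> real^'n \<Rightarrow> real" where
  "phi_cp fh g s = fh + inner g s"

definition m_cp :: "real \<Rightarrow> real^'n \<Rightarrow> (real^'n \<Rightarrow> ereal) \<Rightarrow> real \<Rightarrow> real^'n \<Rightarrow> ereal" where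
  "m_cp fh g ps nuinv s = ereal (phi_cp fh g s + (1/2) * nuinv * (norm s)\<^sup>2) + ps s"

definition phi_m :: "real \<Rightarrow> real^'n \<Rightarrow> real^'n^'n \<Rightarrow> real^'n \<Rightarrow> real" where
  "phi_m fh g B s = fh + inner g s + (1/2) * inner s (B *v s)"

definition m_model :: "real \<Rightarrow> real^'n \<Rightarrow> real^'n^'n \<Rightarrow> (real^'n \<Rightarrow> ereal) \<Rightarrow> real \<Rightarrow> real^'n \<Rightarrow> ereal" where
  "m_model fh g B ps sg s = ereal (phi_m fh g B s + (1/2) * sg * (norm s)\<^sup>2) + ps s"

definition ratio :: "ereal \<Rightarrow> ereal \<Rightarrow> real" where
  "ratio a b = real_of_ereal a / real_of_ereal b"

end

theory Submission
  imports Defs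
begin

(* By the choice of nu_k and (A4), the decrease predicted by the model is at least a multiple of
   sigma_k * |shcp_k|^2, while (A1)-(A3) and (A6) bound its gap to the actual decrease by
   C * |s_k|^2 <= C * th2^2 * |shcp_k|^2.  Hence iterations with large sigma_k are very successful,
   and successful iterations decrease f + h by a multiple of |shcp_k|^2.  If (1 + 1/nu_k) |shcp_k|
   stayed away from 0, sigma_k would stay bounded, so infinitely many iterations would be
   successful (otherwise sigma_k grows geometrically), each decreasing f + h by a fixed amount,
   contradicting (A7).  Along indices where this measure tends to 0, exact Cauchy steps of almost
   minimal norm (A5) satisfy the optimality condition -gh_k - scp_k / nu_k : dpsi(scp_k; x_k), so
   u_k = grad f(x_k) - gh_k - scp_k / nu_k is small by (A6). *)

lemma frequently_small_tendsto_zero_on_infinite_set: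
  fixes Q :: "nat \<Rightarrow> real"
  assumes nonneg: "\<And>k. 0 \<le> Q k"
    and small: "\<And>e. 0 < e \<Longrightarrow> frequently (\<lambda>k. Q k < e) sequentially"
  obtains N where "infinite N" "(Q \<longlongrightarrow> 0) (inf sequentially (principal N))"
proof -
  have "\<exists>k\<ge>j. Q k < 1 / (real j + 1)" for j
    using small[of "1 / (real j + 1)"] unfolding frequently_sequentially by simp
  then obtain g where g: "\<And>j. j \<le> g j \<and> Q (g j) < 1 / (real j + 1)" by metis
  have "infinite (range g)"
    unfolding infinite_nat_iff_unbounded_le using g by blast
  moreover have "(Q \<longlongrightarrow> 0) (inf sequentially (principal (range g)))"
  proof (rule tendstoI)
    fix e :: real assume "0 < e"
    then obtain J :: nat where J: "1 / (real J + 1) < e"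
      using reals_Archimedean by (auto simp: inverse_eq_divide add.commute)
    have "Q k < e" if "k \<in> range g" "Max (g ` {..<J}) < k" for k
    proof -
      from that(1) obtain j where k: "k = g j" by blast
      have "J \<le> j"
      proof (rule ccontr)
        assume "\<not> J \<le> j"
        then have "g j \<le> Max (g ` {..<J})" by (intro Max_ge) auto
        with that(2) k show False by simp
      qed
      then have "1 / (real j + 1) \<le> 1 / (real J + 1)" by (simp add: frac_le)
      with g[of j] J k show ?thesis by simp
    qed
    with nonneg show "\<forall>\<^sub>F k in inf sequentially (principal (range g)). dist (Q k) 0 < e"
      unfolding eventually_inf_principal eventually_sequentially
      by (metis Suc_le_eq dist_real_def diff_zero abs_of_nonneg)
  qed
  ultimately show ?thesis using that by blast
qed

lemma frechet_subdiff_subset_limiting_subdiff: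
  "frechet_subdiff g x \<subseteq> limiting_subdiff g x"
proof
  fix v assume "v \<in> frechet_subdiff g x"
  then show "v \<in> limiting_subdiff g x"
    unfolding limiting_subdiff_def frechet_subdiff_def
    by (intro CollectI conjI exI[of _ "\<lambda>_. x"] exI[of _ "\<lambda>_. v"]) auto
qed

lemma prox_model_argmin_frechet_subdiff:
  fixes g s :: "'a::real_inner" and ps :: "'a \<Rightarrow> ereal"
  assumes "0 < a"
    and argmin: "\<And>t. ereal (c + inner g s + 1/2 * a * (norm s)\<^sup>2) + ps s
                     \<le> ereal (c + inner g t + 1/2 * a * (norm t)\<^sup>2) + ps t"
    and finite: "\<bar>ps s\<bar> \<noteq> \<infinity>"
  shows "- g - a *\<^sub>R s \<in> frechet_subdiff ps s"
  unfolding frechet_subdiff_def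
proof (intro CollectI conjI allI impI)
  show "\<bar>ps s\<bar> \<noteq> \<infinity>" by (fact finite)
  obtain p where p: "ps s = ereal p" using finite by (cases "ps s") auto
  fix e :: real assume "0 < e"
  show "\<exists>d>0. \<forall>y. norm (y - s) < d \<longrightarrow>
      ps s + ereal (inner (- g - a *\<^sub>R s) (y - s) - e * norm (y - s)) \<le> ps y"
  proof (intro exI conjI allI impI)
    show "0 < 2 * e / a" using \<open>0 < a\<close> \<open>0 < e\<close> by simp
    fix y assume y: "norm (y - s) < 2 * e / a"
    show "ps s + ereal (inner (- g - a *\<^sub>R s) (y - s) - e * norm (y - s)) \<le> ps y"
    proof (cases "ps y")
      case (real q)
      have model: "inner g s + 1/2 * a * (norm s)\<^sup>2 + p \<le> inner g y + 1/2 * a * (norm y)\<^sup>2 + q"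
        using argmin[of y] p real by simp
      have "1/2 * a * (norm y)\<^sup>2
          = 1/2 * a * (norm s)\<^sup>2 + a * inner s (y - s) + 1/2 * a * (norm (y - s))\<^sup>2"
        by (simp add: power2_norm_eq_inner inner_diff inner_commute algebra_simps)
      moreover have "inner (- g - a *\<^sub>R s) (y - s) = inner g s - inner g y - a * inner s (y - s)"
        by (simp add: inner_diff_left inner_diff_right algebra_simps)
      moreover have "a * (norm (y - s))\<^sup>2 \<le> 2 * e * norm (y - s)"
        using y \<open>0 < a\<close> mult_right_mono[of "a * norm (y - s)" "2 * e" "norm (y - s)"]
        by (simp add: field_simps power2_eq_square)
      ultimately have "p + (inner (- g - a *\<^sub>R s) (y - s) - e * norm (y - s)) \<le> q"
        using model by linarith
      then show ?thesis using p real by simp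
    qed (use p argmin[of y] in auto)
  qed
qed

lemma spec_norm_nonneg: "0 \<le> spec_norm B"
  unfolding spec_norm_def by (rule onorm_pos_le) simp

lemma abs_quadratic_form_le_spec_norm: "\<bar>inner v (B *v v)\<bar> \<le> spec_norm B * (norm v)\<^sup>2"
proof -
  have "\<bar>inner v (B *v v)\<bar> \<le> norm v * norm (B *v v)" by (rule Cauchy_Schwarz_ineq2)
  also have "\<dots> \<le> norm v * (spec_norm B * norm v)"
    unfolding spec_norm_def by (intro mult_left_mono onorm) simp_all
  finally show ?thesis by (simp add: power2_eq_square mult_ac)
qed

lemma le_max_if_Suc_le_max:
  fixes a :: "nat \<Rightarrow> 'a::linorder"
  assumes "\<And>k. K \<le> k \<Longrightarrow> a (Suc k) \<le> max (a k) M" and "K \<le> k"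
  shows "a k \<le> max (a K) M"
  using assms(2)
proof (induction k rule: dec_induct)
  case (step k)
  then show ?case using assms(1)[of k] by (auto simp: le_max_iff_disj)
qed simp

lemma infinite_if_bounded_and_geometric_growth_otherwise:
  fixes a :: "nat \<Rightarrow> real"
  assumes "1 < g" and pos: "\<And>k. 0 < a k"
    and growth: "\<And>k. \<not> P k \<Longrightarrow> g * a k \<le> a (Suc k)"
    and bounded: "\<And>k. K \<le> k \<Longrightarrow> a k \<le> B"
  shows "infinite {k. P k}"
proof
  assume "finite {k. P k}"
  then obtain m where m: "\<And>k. P k \<Longrightarrow> k \<le> m" using finite_nat_set_iff_bounded_le by auto
  define k0 where "k0 = max K (Suc m)"
  have "K \<le> k0" unfolding k0_def by simp
  have never: "\<not> P k" if "k0 \<le> k" for k using m[of k] that unfolding k0_def by fastforce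
  have geometric: "g ^ j * a k0 \<le> a (k0 + j)" for j
  proof (induction j)
    case (Suc j)
    have "g ^ Suc j * a k0 \<le> g * a (k0 + j)" using Suc \<open>1 < g\<close> by simp
    also have "\<dots> \<le> a (Suc (k0 + j))" using growth never[of "k0 + j"] by simp
    finally show ?case by simp
  qed simp
  obtain j where "B / a k0 < g ^ j" using real_arch_pow \<open>1 < g\<close> by blast
  then have "B < g ^ j * a k0" using pos[of k0] by (simp add: divide_less_eq)
  also have "\<dots> \<le> B" using geometric[of j] bounded[of "k0 + j"] \<open>K \<le> k0\<close> by simp
  finally show False by simp
qed

lemma finite_if_bounded_below_and_uniform_descent:
  fixes F :: "nat \<Rightarrow> real"
  assumes mono: "\<And>k. F (Suc k) \<le> F k" and low: "\<And>k. low \<le> F k" and "0 < d"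
    and descent: "\<And>k. K \<le> k \<Longrightarrow> P k \<Longrightarrow> F (Suc k) \<le> F k - d"
  shows "finite {k. P k}"
proof (rule ccontr)
  assume "infinite {k. P k}"
  then have often: "\<exists>j\<ge>k. P j" for k unfolding infinite_nat_iff_unbounded_le by simp
  have descend: "\<exists>k\<ge>K. F k \<le> F K - real n * d" for n
  proof (induction n)
    case (Suc n)
    then obtain k where "K \<le> k" "F k \<le> F K - real n * d" by blast
    moreover obtain j where "k \<le> j" "P j" using often by blast
    moreover have "F j \<le> F k" using lift_Suc_antimono_le[of F, OF mono \<open>k \<le> j\<close>] .
    ultimately have "K \<le> Suc j" "F (Suc j) \<le> F K - real (Suc n) * d"
      using descent[of j] by (auto simp: algebra_simps)
    then show ?case by blast
  qed auto
  obtain n where n: "F K - low < real n * d" using reals_Archimedean3[OF \<open>0 < d\<close>] by blast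
  obtain k where "F k \<le> F K - real n * d" using descend by blast
  with n low[of k] show False by linarith
qed

lemma tendsto_zero_if_norm_le_mult:
  assumes "\<And>k. norm (v k) \<le> c * q k" and "(q \<longlongrightarrow> 0) F"
  shows "(v \<longlongrightarrow> 0) F"
proof (rule Lim_null_comparison)
  show "\<forall>\<^sub>F k in F. norm (v k) \<le> c * q k" by (intro always_eventually allI assms(1))
  show "((\<lambda>k. c * q k) \<longlongrightarrow> 0) F" using assms(2) by (rule tendsto_mult_right_zero)
qed

locale ir2n_iteration =
  fixes f :: "real^'n \<Rightarrow> real" and gradf :: "real^'n \<Rightarrow> real^'n"
    and h :: "real^'n \<Rightarrow> ereal" and psi :: "real^'n \<Rightarrow> real^'n \<Rightarrow> ereal"
    and Bf :: "real^'n \<Rightarrow> real^'n^'n"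
    and x :: "nat \<Rightarrow> real^'n" and sigma nu rho :: "nat \<Rightarrow> real"
    and fh0 fh1 :: "nat \<Rightarrow> real" and gh :: "nat \<Rightarrow> real^'n"
    and shcp s :: "nat \<Rightarrow> real^'n" and xicp :: "nat \<Rightarrow> ereal"
    and kf kg gam1 gam2 gam3 eta1 eta2 th1 th2 sigmin :: real
  assumes h_proper: "proper_fun h"
    and psi_proper: "\<And>y. proper_fun (psi y)"
    and psi_0: "\<And>y. psi y 0 = h y"
    and kf_pos: "kf > 0" and kg_pos: "kg > 0"
    and gam1_gt_1: "1 < gam1" and gam1_le_gam2: "gam1 \<le> gam2"
    and eta1_pos: "0 < eta1" and eta2_lt_1: "eta2 < 1"
    and th1_pos: "0 < th1" and th1_lt_1: "th1 < 1" and th2_gt_1: "1 < th2"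
    and sigmin_gt: "sigmin > 4 * kf * th1 * th2\<^sup>2 / (eta1 * (1 - th1))"
    and sigma_0: "sigma 0 \<ge> sigmin"
    and x0_dom: "h (x 0) \<noteq> \<infinity>"
    and nu_def: "\<And>k. nu k = th1 / (spec_norm (Bf (x k)) + sigma k)"
    and cauchy_descent: "\<And>k. m_cp (fh0 k) (gh k) (psi (x k)) (1 / nu k) (shcp k)
                               \<le> m_cp (fh0 k) (gh k) (psi (x k)) (1 / nu k) 0"
    and xicp_def: "\<And>k. xicp k = (ereal (phi_cp (fh0 k) (gh k) 0) + psi (x k) 0)
                               - (ereal (phi_cp (fh0 k) (gh k) (shcp k)) + psi (x k) (shcp k))"
    and step: "\<And>k. \<exists>t. m_model (fh0 k) (gh k) (Bf (x k)) (psi (x k)) (sigma k) t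
                          \<le> m_model (fh0 k) (gh k) (Bf (x k)) (psi (x k)) (sigma k) (shcp k)
                     \<and> s k = (if norm t > th2 * norm (shcp k) then shcp k else t)"
    and rho_def: "\<And>k. rho k = ratio
         (ereal (fh0 k) + h (x k) - ereal (fh1 k) - h (x k + s k))
         (ereal (phi_m (fh0 k) (gh k) (Bf (x k)) 0) + psi (x k) 0
            - (ereal (phi_m (fh0 k) (gh k) (Bf (x k)) (s k)) + psi (x k) (s k)))"
    and x_update: "\<And>k. x (Suc k) = (if rho k \<ge> eta1 then x k + s k else x k)"
    and sigma_update: "\<And>k. \<exists>sg.
         (rho k \<ge> eta2 \<longrightarrow> gam3 * sigma k \<le> sg \<and> sg \<le> sigma k)
       \<and> (eta1 \<le> rho k \<and> rho k < eta2 \<longrightarrow> sigma k \<le> sg \<and> sg \<le> gam1 * sigma k)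
       \<and> (rho k < eta1 \<longrightarrow> gam1 * sigma k \<le> sg \<and> sg \<le> gam2 * sigma k)
       \<and> sigma (Suc k) = max sg sigmin"
    and A1: "\<exists>L\<ge>0. \<forall>y v. \<bar>f (y + v) - f y - inner (gradf y) v\<bar> \<le> L / 2 * (norm v)\<^sup>2"
    and A2: "\<exists>kB>0. \<forall>k. spec_norm (Bf (x k)) \<le> kB"
    and A3: "\<exists>kh>0. \<forall>y v. (psi y v = \<infinity> \<longleftrightarrow> h (y + v) = \<infinity>) \<and>
               (psi y v \<noteq> \<infinity> \<longrightarrow>
                  \<bar>real_of_ereal (psi y v) - real_of_ereal (h (y + v))\<bar> \<le> kh * (norm v)\<^sup>2)"
    and A4: "\<And>k. ereal (phi_m (fh0 k) (gh k) (Bf (x k)) 0) + psi (x k) 0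
               - (ereal (phi_m (fh0 k) (gh k) (Bf (x k)) (s k)) + psi (x k) (s k))
             \<ge> ereal (1 - th1) * xicp k"
    and A5: "\<exists>ks. 0 < ks \<and> ks \<le> 1 \<and> (\<forall>k.
               argmin_set (m_cp (fh0 k) (gh k) (psi (x k)) (1 / nu k)) \<noteq> {} \<and>
               norm (shcp k) \<ge> ks * Inf (norm ` argmin_set (m_cp (fh0 k) (gh k) (psi (x k)) (1 / nu k))))"
    and A6: "\<And>k. \<bar>f (x k) - fh0 k\<bar> \<le> kf * (norm (s k))\<^sup>2"
            "\<And>k. \<bar>f (x k + s k) - fh1 k\<bar> \<le> kf * (norm (s k))\<^sup>2"
            "\<And>k. norm (gradf (x k) - gh k) \<le> kg * norm (s k)"
    and A7: "\<exists>low. \<forall>y. ereal low \<le> ereal (f y) + h y"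
begin

lemma sigmin_pos: "0 < sigmin"
proof -
  have "0 < 4 * kf * th1 * th2\<^sup>2 / (eta1 * (1 - th1))"
    using kf_pos th1_pos th1_lt_1 th2_gt_1 eta1_pos by simp
  then show ?thesis using sigmin_gt by linarith
qed

lemma sigma_ge_sigmin: "sigmin \<le> sigma k"
proof (cases k)
  case (Suc j)
  then show ?thesis using sigma_update[of j] by auto
qed (use sigma_0 in simp)

lemma sigma_pos: "0 < sigma k"
  using sigma_ge_sigmin sigmin_pos by (rule order.strict_trans2[rotated])

lemma inverse_nu: "1 / nu k = (spec_norm (Bf (x k)) + sigma k) / th1"
  using nu_def by simp

lemma nu_pos: "0 < nu k"
  using nu_def[of k] spec_norm_nonneg[of "Bf (x k)"] sigma_pos[of k] th1_pos by simp

lemma nu_le: "nu k \<le> th1 / sigmin"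
  unfolding nu_def using spec_norm_nonneg[of "Bf (x k)"] sigma_ge_sigmin[of k] sigmin_pos th1_pos
  by (intro divide_left_mono) auto

lemma norm_step_le: "norm (s k) \<le> th2 * norm (shcp k)"
proof -
  have "norm (shcp k) \<le> th2 * norm (shcp k)"
    using th2_gt_1 by (simp add: mult_le_cancel_right1)
  then show ?thesis using step[of k] by (auto split: if_splits)
qed

lemma psi_steps_finite:
  assumes "h (x k) \<noteq> \<infinity>"
  shows "psi (x k) (shcp k) \<noteq> \<infinity>" and "psi (x k) (s k) \<noteq> \<infinity>"
proof -
  obtain hk where hk: "h (x k) = ereal hk"
    using assms h_proper unfolding proper_fun_def by (cases "h (x k)") auto
  show cp: "psi (x k) (shcp k) \<noteq> \<infinity>"
    using cauchy_descent[of k] hk psi_0 unfolding m_cp_def by auto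
  then obtain pk where "psi (x k) (shcp k) = ereal pk"
    using psi_proper unfolding proper_fun_def by (cases "psi (x k) (shcp k)") auto
  then have "\<bar>xicp k\<bar> \<noteq> \<infinity>" using xicp_def[of k] hk psi_0 by simp
  then show "psi (x k) (s k) \<noteq> \<infinity>"
    using A4[of k] hk psi_0 th1_lt_1 by (cases "xicp k") auto
qed

lemma h_iterate_finite: "h (x k) \<noteq> \<infinity>"
proof (induction k)
  case (Suc k)
  have "h (x k + s k) \<noteq> \<infinity>" using psi_steps_finite(2)[OF Suc] A3 by blast
  with Suc show ?case using x_update[of k] by simp
qed (fact x0_dom)

definition h_x :: "nat \<Rightarrow> real" where "h_x k = real_of_ereal (h (x k))"
definition h_xs :: "nat \<Rightarrow> real" where "h_xs k = real_of_ereal (h (x k + s k))"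
definition psi_cp :: "nat \<Rightarrow> real" where "psi_cp k = real_of_ereal (psi (x k) (shcp k))"
definition psi_s :: "nat \<Rightarrow> real" where "psi_s k = real_of_ereal (psi (x k) (s k))"

lemma ereal_values:
  shows h_x_eq: "h (x k) = ereal (h_x k)" and psi_0_eq: "psi (x k) 0 = ereal (h_x k)"
    and h_xs_eq: "h (x k + s k) = ereal (h_xs k)"
    and psi_cp_eq: "psi (x k) (shcp k) = ereal (psi_cp k)"
    and psi_s_eq: "psi (x k) (s k) = ereal (psi_s k)"
proof -
  have not_minf: "h y \<noteq> -\<infinity>" "psi y v \<noteq> -\<infinity>" for y v
    using h_proper psi_proper unfolding proper_fun_def by blast+
  have "h (x k + s k) \<noteq> \<infinity>"
    using psi_steps_finite(2)[OF h_iterate_finite] A3 by blast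
  with not_minf h_iterate_finite psi_steps_finite[OF h_iterate_finite]
  have "\<bar>h (x k)\<bar> \<noteq> \<infinity>" "\<bar>h (x k + s k)\<bar> \<noteq> \<infinity>"
    "\<bar>psi (x k) (shcp k)\<bar> \<noteq> \<infinity>" "\<bar>psi (x k) (s k)\<bar> \<noteq> \<infinity>"
    by auto
  then show "h (x k) = ereal (h_x k)" "h (x k + s k) = ereal (h_xs k)"
    "psi (x k) (shcp k) = ereal (psi_cp k)" "psi (x k) (s k) = ereal (psi_s k)"
    unfolding h_x_def h_xs_def psi_cp_def psi_s_def by (simp_all add: ereal_real')
  then show "psi (x k) 0 = ereal (h_x k)" using psi_0 by simp
qed

(* The real values of xicp k and of the numerator and denominator of rho k. *)
definition cauchy_decrease :: "nat \<Rightarrow> real" where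
  "cauchy_decrease k = h_x k - inner (gh k) (shcp k) - psi_cp k"

definition model_decrease :: "nat \<Rightarrow> real" where
  "model_decrease k = h_x k - inner (gh k) (s k) - 1/2 * inner (s k) (Bf (x k) *v s k) - psi_s k"

definition actual_decrease :: "nat \<Rightarrow> real" where
  "actual_decrease k = fh0 k + h_x k - fh1 k - h_xs k"

definition obj :: "nat \<Rightarrow> real" where
  "obj k = f (x k) + h_x k"

lemma cauchy_decrease_ge: "(norm (shcp k))\<^sup>2 / (2 * nu k) \<le> cauchy_decrease k"
  using cauchy_descent[of k]
  unfolding m_cp_def phi_cp_def cauchy_decrease_def psi_0_eq psi_cp_eq by simp

lemma model_decrease_ge_cauchy_decrease: "(1 - th1) * cauchy_decrease k \<le> model_decrease k"
  using A4[of k] unfolding xicp_def phi_m_def phi_cp_def psi_0_eq psi_cp_eq psi_s_eq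
    model_decrease_def cauchy_decrease_def by simp (simp add: algebra_simps)

lemma rho_eq: "rho k = actual_decrease k / model_decrease k"
  unfolding rho_def ratio_def h_x_eq h_xs_eq psi_0_eq psi_s_eq phi_m_def
    actual_decrease_def model_decrease_def by simp

lemma model_decrease_ge: "(1 - th1) / (2 * th1) * sigma k * (norm (shcp k))\<^sup>2 \<le> model_decrease k"
proof -
  have "sigma k / th1 \<le> 1 / nu k"
    unfolding inverse_nu using spec_norm_nonneg[of "Bf (x k)"] th1_pos
    by (intro divide_right_mono) auto
  have "(1 - th1) / (2 * th1) * sigma k * (norm (shcp k))\<^sup>2
      = (1 - th1) * (sigma k / th1 * (norm (shcp k))\<^sup>2 / 2)"
    by simp
  also have "\<dots> \<le> (1 - th1) * (1 / nu k * (norm (shcp k))\<^sup>2 / 2)"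
    using \<open>sigma k / th1 \<le> 1 / nu k\<close> th1_lt_1
    by (intro mult_left_mono divide_right_mono mult_right_mono) auto
  also have "\<dots> \<le> (1 - th1) * cauchy_decrease k"
    using cauchy_decrease_ge[of k] th1_lt_1 by (intro mult_left_mono) auto
  also have "\<dots> \<le> model_decrease k"
    by (fact model_decrease_ge_cauchy_decrease)
  finally show ?thesis .
qed

lemma model_decrease_ge_step:
  "(1 - th1) / (2 * th1 * th2\<^sup>2) * sigma k * (norm (s k))\<^sup>2 \<le> model_decrease k"
proof -
  have "(norm (s k))\<^sup>2 \<le> th2\<^sup>2 * (norm (shcp k))\<^sup>2"
    using power_mono[OF norm_step_le[of k]] by (simp add: power_mult_distrib)
  moreover have "0 \<le> (1 - th1) / (2 * th1 * th2\<^sup>2) * sigma k"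
    using th1_pos th1_lt_1 sigma_pos[of k] by simp
  ultimately have "(1 - th1) / (2 * th1 * th2\<^sup>2) * sigma k * (norm (s k))\<^sup>2
      \<le> (1 - th1) / (2 * th1 * th2\<^sup>2) * sigma k * (th2\<^sup>2 * (norm (shcp k))\<^sup>2)"
    by (rule mult_left_mono)
  also have "\<dots> = (1 - th1) / (2 * th1) * sigma k * (norm (shcp k))\<^sup>2"
    using th2_gt_1 by simp
  finally show ?thesis using model_decrease_ge by (rule order.trans)
qed

lemma cauchy_step_zero_if_step_zero:
  assumes "s k = 0" shows "shcp k = 0"
proof -
  have "model_decrease k = 0"
    using assms psi_0_eq[of k] unfolding model_decrease_def psi_s_def by simp
  then have "(1 - th1) / (2 * th1) * sigma k * (norm (shcp k))\<^sup>2 \<le> 0"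
    using model_decrease_ge by metis
  moreover have "0 < (1 - th1) / (2 * th1) * sigma k"
    using th1_pos th1_lt_1 sigma_pos by simp
  ultimately show ?thesis by (metis mult_pos_pos not_le zero_less_norm_iff zero_less_power)
qed

lemma decrease_error_bound:
  "\<exists>C\<ge>0. \<forall>k. \<bar>actual_decrease k - model_decrease k\<bar> \<le> C * (norm (s k))\<^sup>2"
proof -
  obtain L where "0 \<le> L"
    and taylor: "\<And>y v. \<bar>f (y + v) - f y - inner (gradf y) v\<bar> \<le> L / 2 * (norm v)\<^sup>2"
    using A1 by blast
  obtain kB where "0 < kB" and kB: "\<And>k. spec_norm (Bf (x k)) \<le> kB"
    using A2 by blast
  obtain kh where "0 < kh" and psi_h: "\<And>y v. psi y v \<noteq> \<infinity> \<Longrightarrow>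
      \<bar>real_of_ereal (psi y v) - real_of_ereal (h (y + v))\<bar> \<le> kh * (norm v)\<^sup>2"
    using A3 by blast
  define C where "C = 2 * kf + L / 2 + kg + kB / 2 + kh"
  have "\<bar>actual_decrease k - model_decrease k\<bar> \<le> C * (norm (s k))\<^sup>2" for k
  proof -
    let ?n = "(norm (s k))\<^sup>2"
    have grad: "\<bar>inner (gradf (x k) - gh k) (s k)\<bar> \<le> kg * ?n"
      using Cauchy_Schwarz_ineq2[of "gradf (x k) - gh k" "s k"]
        mult_right_mono[OF A6(3)[of k] norm_ge_zero[of "s k"]]
      by (simp add: power2_eq_square mult.assoc)
    have hessian: "\<bar>inner (s k) (Bf (x k) *v s k)\<bar> \<le> kB * ?n"
      using abs_quadratic_form_le_spec_norm[of "s k" "Bf (x k)"]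
        mult_right_mono[OF kB[of k] zero_le_power2[of "norm (s k)"]]
      by linarith
    have "psi (x k) (s k) \<noteq> \<infinity>" using psi_s_eq by simp
    then have psi: "\<bar>psi_s k - h_xs k\<bar> \<le> kh * ?n"
      unfolding psi_s_def h_xs_def by (rule psi_h)
    have "actual_decrease k - model_decrease k = (fh0 k - f (x k)) + (f (x k + s k) - fh1 k)
        - (f (x k + s k) - f (x k) - inner (gradf (x k)) (s k)) - inner (gradf (x k) - gh k) (s k)
        + 1/2 * inner (s k) (Bf (x k) *v s k) + (psi_s k - h_xs k)"
      unfolding actual_decrease_def model_decrease_def by (simp add: inner_diff_left algebra_simps)
    then show ?thesis
      using A6(1,2)[of k] taylor[of "x k" "s k"] grad hessian psi
      unfolding C_def abs_le_iff by (simp add: algebra_simps)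
  qed
  moreover have "0 \<le> C" unfolding C_def using kf_pos kg_pos \<open>0 \<le> L\<close> \<open>0 < kB\<close> \<open>0 < kh\<close> by simp
  ultimately show ?thesis by blast
qed

lemma obj_lower_bound: "\<exists>low. \<forall>k. low \<le> obj k"
  using A7 unfolding obj_def by (metis h_x_eq plus_ereal.simps(1) ereal_less_eq(3))

lemma obj_unsuccessful: "rho k < eta1 \<Longrightarrow> obj (Suc k) = obj k"
  unfolding obj_def h_x_def using x_update by simp

lemma successful_obj_decrease:
  "\<exists>c>0. \<forall>k. eta1 \<le> rho k \<longrightarrow> c * (norm (shcp k))\<^sup>2 \<le> obj k - obj (Suc k)"
proof -
  define b where "b = eta1 * (1 - th1) / (2 * th1)"
  (* The lower bound on sigmin is exactly what makes c positive: the decrease eta1 times the model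
     decrease guaranteed at successful steps dominates the evaluation errors 2 kf |s_k|^2. *)
  define c where "c = b * sigmin - 2 * kf * th2\<^sup>2"
  have "4 * kf * th1 * th2\<^sup>2 < sigmin * (eta1 * (1 - th1))"
    using sigmin_gt eta1_pos th1_lt_1 by (simp add: pos_divide_less_eq)
  then have "0 < c"
    unfolding c_def b_def using th1_pos by (simp add: field_simps)
  moreover have "c * (norm (shcp k))\<^sup>2 \<le> obj k - obj (Suc k)" if "eta1 \<le> rho k" for k
  proof -
    let ?m = "(norm (shcp k))\<^sup>2"
    have lower: "b * sigma k * ?m \<le> eta1 * model_decrease k"
      using mult_left_mono[OF model_decrease_ge[of k], of eta1] eta1_pos
      unfolding b_def by (simp add: field_simps)
    have "0 < model_decrease k"
    proof (rule ccontr)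
      assume "\<not> 0 < model_decrease k"
      have "0 \<le> b * sigma k * ?m"
        unfolding b_def using eta1_pos th1_pos th1_lt_1 sigma_pos[of k] by simp
      then have "0 \<le> eta1 * model_decrease k" using lower by linarith
      with \<open>\<not> 0 < model_decrease k\<close> eta1_pos have "model_decrease k = 0"
        by (simp add: zero_le_mult_iff)
      then show False using rho_eq[of k] that eta1_pos by simp \<comment> \<open>a zero denominator gives rho k = 0, as x / 0 = 0\<close>
    qed
    then have "eta1 * model_decrease k \<le> actual_decrease k"
      using rho_eq[of k] that by (simp add: pos_le_divide_eq)
    moreover have "b * sigmin * ?m \<le> b * sigma k * ?m"
      unfolding b_def using eta1_pos th1_pos th1_lt_1 sigma_ge_sigmin[of k]
      by (intro mult_right_mono mult_left_mono) auto
    moreover have "2 * kf * (norm (s k))\<^sup>2 \<le> 2 * kf * (th2\<^sup>2 * ?m)"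
      using power_mono[OF norm_step_le[of k]] kf_pos by (simp add: power_mult_distrib)
    moreover have "actual_decrease k - 2 * kf * (norm (s k))\<^sup>2 \<le> obj k - obj (Suc k)"
      using A6(1,2)[of k] x_update[of k] that
      unfolding obj_def actual_decrease_def h_x_def h_xs_def by (simp add: abs_le_iff)
    ultimately show ?thesis using lower unfolding c_def by (simp add: algebra_simps)
  qed
  ultimately show ?thesis by blast
qed

lemma obj_nonincreasing: "obj (Suc k) \<le> obj k"
proof (cases "eta1 \<le> rho k")
  case True
  obtain c where "0 < c"
    and decrease: "\<And>k. eta1 \<le> rho k \<Longrightarrow> c * (norm (shcp k))\<^sup>2 \<le> obj k - obj (Suc k)"
    using successful_obj_decrease by blast
  have "0 \<le> c * (norm (shcp k))\<^sup>2" using \<open>0 < c\<close> by simp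
  with decrease[OF True] show ?thesis by linarith
qed (simp add: obj_unsuccessful)

lemma sigma_Suc_le: "sigma (Suc k) \<le> max (gam2 * sigma k) sigmin"
proof -
  obtain sg where sg:
      "eta2 \<le> rho k \<longrightarrow> sg \<le> sigma k"
      "eta1 \<le> rho k \<and> rho k < eta2 \<longrightarrow> sg \<le> gam1 * sigma k"
      "rho k < eta1 \<longrightarrow> sg \<le> gam2 * sigma k"
      "sigma (Suc k) = max sg sigmin"
    using sigma_update[of k] by blast
  have "sigma k \<le> gam1 * sigma k" "gam1 * sigma k \<le> gam2 * sigma k"
    using gam1_gt_1 gam1_le_gam2 sigma_pos[of k] by simp_all
  with sg have "sg \<le> gam2 * sigma k" by linarith
  with sg(4) show ?thesis by simp
qed

lemma sigma_Suc_le_if_very_successful: "eta2 \<le> rho k \<Longrightarrow> sigma (Suc k) \<le> sigma k"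
  using sigma_update[of k] sigma_ge_sigmin[of k] by auto

lemma sigma_Suc_ge_if_unsuccessful: "rho k < eta1 \<Longrightarrow> gam1 * sigma k \<le> sigma (Suc k)"
  using sigma_update[of k] by (auto simp: le_max_iff_disj)

lemma very_successful_if_sigma_large: "\<exists>\<sigma>. \<forall>k. s k \<noteq> 0 \<longrightarrow> \<sigma> \<le> sigma k \<longrightarrow> eta2 \<le> rho k"
proof -
  obtain C where error: "\<And>k. \<bar>actual_decrease k - model_decrease k\<bar> \<le> C * (norm (s k))\<^sup>2"
    using decrease_error_bound by blast
  define a where "a = (1 - th1) / (2 * th1 * th2\<^sup>2)"
  have "0 < a" unfolding a_def using th1_pos th1_lt_1 th2_gt_1 by simp
  have "eta2 \<le> rho k" if "s k \<noteq> 0" and large: "C / (a * (1 - eta2)) \<le> sigma k" for k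
  proof -
    let ?n = "(norm (s k))\<^sup>2"
    have "0 < ?n" using that(1) by simp
    have "C \<le> (1 - eta2) * (a * sigma k)"
      using large \<open>0 < a\<close> eta2_lt_1 by (simp add: pos_divide_le_eq algebra_simps)
    then have "C * ?n \<le> (1 - eta2) * (a * sigma k) * ?n"
      using \<open>0 < ?n\<close> by (intro mult_right_mono) auto
    also have "\<dots> = (1 - eta2) * (a * sigma k * ?n)" by simp
    also have "\<dots> \<le> (1 - eta2) * model_decrease k"
      using model_decrease_ge_step[of k] eta2_lt_1 unfolding a_def by (intro mult_left_mono) auto
    finally have "eta2 * model_decrease k \<le> actual_decrease k"
      using error[of k] by (simp add: abs_le_iff algebra_simps)
    moreover have "0 < model_decrease k"
      using model_decrease_ge_step[of k] \<open>0 < a\<close> sigma_pos[of k] \<open>0 < ?n\<close>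
      unfolding a_def[symmetric] by (smt (verit) mult_pos_pos)
    ultimately show ?thesis using rho_eq[of k] by (simp add: pos_le_divide_eq)
  qed
  then show ?thesis by blast
qed

lemma sigma_bounded_if_steps_nonzero:
  assumes "\<And>k. K \<le> k \<Longrightarrow> s k \<noteq> 0"
  shows "\<exists>B. \<forall>k\<ge>K. sigma k \<le> B"
proof -
  obtain \<sigma> where very_successful: "\<And>k. s k \<noteq> 0 \<Longrightarrow> \<sigma> \<le> sigma k \<Longrightarrow> eta2 \<le> rho k"
    using very_successful_if_sigma_large by blast
  have "sigma (Suc k) \<le> max (sigma k) (max (gam2 * \<sigma>) sigmin)" if "K \<le> k" for k
  proof (cases "\<sigma> \<le> sigma k")
    case True
    then show ?thesis
      using very_successful assms that sigma_Suc_le_if_very_successful by (simp add: le_max_iff_disj)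
  next
    case False
    then have "gam2 * sigma k \<le> gam2 * \<sigma>" using gam1_gt_1 gam1_le_gam2 by simp
    then show ?thesis using sigma_Suc_le[of k] by (auto simp: le_max_iff_disj)
  qed
  then show ?thesis using le_max_if_Suc_le_max[of K sigma] by blast
qed

lemma successful_infinitely_often:
  assumes "\<And>k. K \<le> k \<Longrightarrow> sigma k \<le> B"
  shows "infinite {k. eta1 \<le> rho k}"
  using gam1_gt_1 sigma_pos _ assms
proof (rule infinite_if_bounded_and_geometric_growth_otherwise)
  show "gam1 * sigma k \<le> sigma (Suc k)" if "\<not> eta1 \<le> rho k" for k
    using that by (simp add: sigma_Suc_ge_if_unsuccessful)
qed

lemma inverse_nu_bounded:
  assumes "\<And>k. K \<le> k \<Longrightarrow> sigma k \<le> B"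
  shows "\<exists>R. \<forall>k\<ge>K. 1 + 1 / nu k \<le> R"
proof -
  obtain kB where kB: "\<And>k. spec_norm (Bf (x k)) \<le> kB" using A2 by blast
  have "1 + 1 / nu k \<le> 1 + (kB + B) / th1" if "K \<le> k" for k
    unfolding inverse_nu using kB[of k] assms[OF that] th1_pos by (simp add: divide_right_mono)
  then show ?thesis by blast
qed

lemma cauchy_measure_frequently_small:
  assumes "0 < e"
  shows "frequently (\<lambda>k. (1 + 1 / nu k) * norm (shcp k) < e) sequentially"
proof (rule ccontr)
  assume "\<not> ?thesis"
  then obtain K where large: "\<And>k. K \<le> k \<Longrightarrow> e \<le> (1 + 1 / nu k) * norm (shcp k)"
    unfolding not_frequently eventually_sequentially by (auto simp: not_less)
  have "s k \<noteq> 0" if "K \<le> k" for k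
    using large[OF that] cauchy_step_zero_if_step_zero[of k] assms by auto
  then obtain B where B: "\<And>k. K \<le> k \<Longrightarrow> sigma k \<le> B"
    using sigma_bounded_if_steps_nonzero by blast
  obtain R where R_ge: "\<And>k. K \<le> k \<Longrightarrow> 1 + 1 / nu k \<le> R"
    using inverse_nu_bounded[OF B] by blast
  have "0 < 1 / nu K" using nu_pos[of K] by simp
  with R_ge[of K] have "0 < R" by linarith
  have cauchy_large: "e / R \<le> norm (shcp k)" if "K \<le> k" for k
  proof -
    have "e \<le> R * norm (shcp k)"
      using large[OF that] mult_right_mono[OF R_ge[OF that] norm_ge_zero[of "shcp k"]] by linarith
    then show ?thesis using \<open>0 < R\<close> by (simp add: divide_le_eq mult.commute)
  qed
  obtain c where "0 < c"
    and decrease: "\<And>k. eta1 \<le> rho k \<Longrightarrow> c * (norm (shcp k))\<^sup>2 \<le> obj k - obj (Suc k)"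
    using successful_obj_decrease by blast
  obtain low where low: "\<And>k. low \<le> obj k" using obj_lower_bound by blast
  have "finite {k. eta1 \<le> rho k}"
  proof (rule finite_if_bounded_below_and_uniform_descent[where F = obj and K = K, OF obj_nonincreasing low])
    show "0 < c * (e / R)\<^sup>2" using \<open>0 < c\<close> assms \<open>0 < R\<close> by simp
    show "obj (Suc k) \<le> obj k - c * (e / R)\<^sup>2" if "K \<le> k" "eta1 \<le> rho k" for k
    proof -
      have "(e / R)\<^sup>2 \<le> (norm (shcp k))\<^sup>2"
        using cauchy_large[OF that(1)] assms \<open>0 < R\<close> by (intro power_mono) auto
      then have "c * (e / R)\<^sup>2 \<le> c * (norm (shcp k))\<^sup>2" using \<open>0 < c\<close> by (intro mult_left_mono) auto
      with decrease[OF that(2)] show ?thesis by linarith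
    qed
  qed
  with successful_infinitely_often B show False by blast
qed

lemma exact_cauchy_step_residual_subgradient:
  assumes "t \<in> argmin_set (m_cp (fh0 k) (gh k) (psi (x k)) (1 / nu k))"
  shows "gradf (x k) - gh k - (1 / nu k) *\<^sub>R t \<in> (\<lambda>w. gradf (x k) + w) ` limiting_subdiff (psi (x k)) t"
proof -
  have min: "\<And>t'. m_cp (fh0 k) (gh k) (psi (x k)) (1 / nu k) t
      \<le> m_cp (fh0 k) (gh k) (psi (x k)) (1 / nu k) t'"
    using assms unfolding argmin_set_def by blast
  have "psi (x k) t \<noteq> \<infinity>" using min[of 0] unfolding m_cp_def psi_0_eq by auto
  moreover have "psi (x k) t \<noteq> -\<infinity>" using psi_proper unfolding proper_fun_def by blast
  ultimately have "\<bar>psi (x k) t\<bar> \<noteq> \<infinity>" by (cases "psi (x k) t") auto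
  with nu_pos min have "- gh k - (1 / nu k) *\<^sub>R t \<in> frechet_subdiff (psi (x k)) t"
    unfolding m_cp_def phi_cp_def by (intro prox_model_argmin_frechet_subdiff) auto
  then have "- gh k - (1 / nu k) *\<^sub>R t \<in> limiting_subdiff (psi (x k)) t"
    using frechet_subdiff_subset_limiting_subdiff by blast
  then show ?thesis by (rule rev_image_eqI) simp
qed

(* (A5) only bounds the infimum of the norms of the exact Cauchy steps, which need not be attained;
   a slack of nu k / (k + 1) is harmless since the residual scales the step by 1 / nu k. *)
lemma exact_cauchy_steps:
  obtains ks scp where "0 < ks"
    and "\<And>k. scp k \<in> argmin_set (m_cp (fh0 k) (gh k) (psi (x k)) (1 / nu k))"
    and "\<And>k. norm (scp k) \<le> norm (shcp k) / ks + nu k / (real k + 1)"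
proof -
  define A where "A k = argmin_set (m_cp (fh0 k) (gh k) (psi (x k)) (1 / nu k))" for k
  obtain ks where "0 < ks" and nonempty: "\<And>k. A k \<noteq> {}"
    and inf_le: "\<And>k. ks * Inf (norm ` A k) \<le> norm (shcp k)"
    using A5 unfolding A_def by blast
  have "\<exists>t\<in>A k. norm t < Inf (norm ` A k) + nu k / (real k + 1)" for k
    using cInf_lessD[of "norm ` A k"] nonempty[of k] nu_pos[of k] by simp
  then obtain scp where scp: "\<And>k. scp k \<in> A k" "\<And>k. norm (scp k) < Inf (norm ` A k) + nu k / (real k + 1)"
    by metis
  have "Inf (norm ` A k) \<le> norm (shcp k) / ks" for k
    using inf_le[of k] \<open>0 < ks\<close> by (simp add: pos_le_divide_eq mult.commute)
  with scp(2) have "norm (scp k) \<le> norm (shcp k) / ks + nu k / (real k + 1)" for k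
    by (smt (verit))
  with \<open>0 < ks\<close> scp(1) show ?thesis unfolding A_def by (rule that)
qed

definition criticality :: "nat \<Rightarrow> real" where
  "criticality k = (1 + 1 / nu k) * norm (shcp k) + 1 / (real k + 1)"

lemma criticality_ge: "(1 + 1 / nu k) * norm (shcp k) \<le> criticality k"
  unfolding criticality_def by simp

lemma criticality_nonneg: "0 \<le> criticality k"
  using nu_pos[of k] unfolding criticality_def by (simp add: add_pos_pos)

lemma criticality_frequently_small:
  assumes "0 < e"
  shows "frequently (\<lambda>k. criticality k < e) sequentially"
proof -
  have "eventually (\<lambda>k. 1 / (real k + 1) < e / 2) sequentially"
    using order_tendstoD(2)[OF LIMSEQ_inverse_real_of_nat, of "e / 2"] assms
    by (simp add: inverse_eq_divide add.commute)
  with cauchy_measure_frequently_small[of "e / 2"] assms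
  have "frequently (\<lambda>k. 1 / (real k + 1) < e / 2 \<and> (1 + 1 / nu k) * norm (shcp k) < e / 2) sequentially"
    by (simp add: frequently_eventually_conj)
  then show ?thesis by (rule frequently_elim1) (unfold criticality_def, linarith)
qed

lemma norm_cauchy_step_le_criticality: "norm (shcp k) \<le> criticality k"
  using criticality_ge[of k] nu_pos[of k] mult_right_mono[of 1 "1 + 1 / nu k" "norm (shcp k)"]
  by simp

lemma norm_step_le_criticality: "norm (s k) \<le> th2 * criticality k"
  using norm_step_le[of k] norm_cauchy_step_le_criticality[of k] th2_gt_1
  by (smt (verit) mult_left_mono)

lemma exact_cauchy_step_norm_le_criticality:
  assumes "0 < ks" and "norm t \<le> norm (shcp k) / ks + nu k / (real k + 1)"
  shows "norm t \<le> (1 / ks + th1 / sigmin) * criticality k"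
proof -
  have "norm (shcp k) / ks \<le> criticality k / ks"
    using norm_cauchy_step_le_criticality \<open>0 < ks\<close> by (simp add: divide_right_mono)
  moreover have "nu k / (real k + 1) \<le> th1 / sigmin * criticality k"
  proof -
    have "nu k / (real k + 1) \<le> th1 / sigmin / (real k + 1)"
      using nu_le[of k] by (rule divide_right_mono) simp
    also have "\<dots> = th1 / sigmin * (1 / (real k + 1))" by simp
    also have "\<dots> \<le> th1 / sigmin * criticality k"
      using th1_pos sigmin_pos nu_pos[of k] unfolding criticality_def
      by (intro mult_left_mono) (simp_all add: add_pos_pos)
    finally show ?thesis .
  qed
  ultimately show ?thesis using assms(2) by (simp add: algebra_simps)
qed

lemma residual_norm_le_criticality:
  assumes "0 < ks" and "norm t \<le> norm (shcp k) / ks + nu k / (real k + 1)"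
  shows "norm (gradf (x k) - gh k - (1 / nu k) *\<^sub>R t) \<le> (kg * th2 + 1 / ks + 1) * criticality k"
proof -
  have "kg * norm (s k) \<le> kg * (th2 * criticality k)"
    using norm_step_le_criticality kg_pos by (intro mult_left_mono) auto
  with A6(3)[of k] have "norm (gradf (x k) - gh k) \<le> kg * th2 * criticality k"
    by (simp add: mult.assoc)
  moreover have "(1 / nu k) * norm t \<le> (1 / nu k) * norm (shcp k) / ks + 1 / (real k + 1)"
    using mult_left_mono[OF assms(2), of "1 / nu k"] nu_pos[of k] by (simp add: algebra_simps)
  moreover have "(1 / nu k) * norm (shcp k) \<le> criticality k"
    using criticality_ge[of k] norm_ge_zero[of "shcp k"] unfolding distrib_right by linarith
  then have "(1 / nu k) * norm (shcp k) / ks \<le> criticality k / ks"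
    using \<open>0 < ks\<close> by (rule divide_right_mono[OF _ less_imp_le])
  moreover have "1 / (real k + 1) \<le> criticality k"
    using nu_pos[of k] unfolding criticality_def by simp
  moreover have "norm (gradf (x k) - gh k - (1 / nu k) *\<^sub>R t)
      \<le> norm (gradf (x k) - gh k) + (1 / nu k) * norm t"
    using norm_triangle_ineq4[of "gradf (x k) - gh k" "(1 / nu k) *\<^sub>R t"] nu_pos[of k] by simp
  ultimately show ?thesis by (simp add: algebra_simps)
qed

end

theorem lemma3p9:
  fixes f :: "real^'n \<Rightarrow> real" and gradf :: "real^'n \<Rightarrow> real^'n"
    and h :: "real^'n \<Rightarrow> ereal" and psi :: "real^'n \<Rightarrow> real^'n \<Rightarrow> ereal"
    and Bf :: "real^'n \<Rightarrow> real^'n^'n"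
    and x :: "nat \<Rightarrow> real^'n" and sigma nu rho :: "nat \<Rightarrow> real"
    and fh0 fh1 :: "nat \<Rightarrow> real" and gh :: "nat \<Rightarrow> real^'n"
    and shcp s :: "nat \<Rightarrow> real^'n" and xicp :: "nat \<Rightarrow> ereal"
    and kf kg gam1 gam2 gam3 eta1 eta2 th1 th2 sigmin :: real
  assumes f_grad: "\<And>y. (f has_derivative (\<lambda>v. inner (gradf y) v)) (at y)"
    and f_C1: "continuous_on UNIV gradf"
    and h_proper: "proper_fun h" and h_lsc: "lsc_fun h"
    and psi_proper: "\<And>y. proper_fun (psi y)" and psi_lsc: "\<And>y. lsc_fun (psi y)"
    and psi_0: "\<And>y. psi y 0 = h y"
    and psi_subdiff: "\<And>y. limiting_subdiff (psi y) 0 \<subseteq> limiting_subdiff h y"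
    and psi_prox: "\<exists>lam>0. \<forall>y lam'. 0 < lam' \<and> lam' < lam \<longrightarrow>
                     (\<exists>c. \<forall>w. ereal c \<le> psi y w + ereal ((norm w)\<^sup>2 / (2 * lam')))"
    and B_sym: "\<And>y. transpose (Bf y) = Bf y"
    and params: "kf > 0" "kg > 0" "0 < gam3" "gam3 \<le> 1" "1 < gam1" "gam1 \<le> gam2"
      "0 < eta1" "eta1 \<le> eta2" "eta2 < 1" "0 < th1" "th1 < 1" "1 < th2"
      "sigmin > 4 * kf * th1 * th2\<^sup>2 / (eta1 * (1 - th1))" "sigma 0 \<ge> sigmin"
    and x0_dom: "h (x 0) \<noteq> \<infinity>"
    and nu_def: "\<And>k. nu k = th1 / (spec_norm (Bf (x k)) + sigma k)"
    and cauchy_descent: "\<And>k. m_cp (fh0 k) (gh k) (psi (x k)) (1 / nu k) (shcp k)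
                               \<le> m_cp (fh0 k) (gh k) (psi (x k)) (1 / nu k) 0"
    and xicp_def: "\<And>k. xicp k = (ereal (phi_cp (fh0 k) (gh k) 0) + psi (x k) 0)
                               - (ereal (phi_cp (fh0 k) (gh k) (shcp k)) + psi (x k) (shcp k))"
    and step: "\<And>k. \<exists>t. m_model (fh0 k) (gh k) (Bf (x k)) (psi (x k)) (sigma k) t
                          \<le> m_model (fh0 k) (gh k) (Bf (x k)) (psi (x k)) (sigma k) (shcp k)
                     \<and> s k = (if norm t > th2 * norm (shcp k) then shcp k else t)"
    and rho_def: "\<And>k. rho k = ratio
         (ereal (fh0 k) + h (x k) - ereal (fh1 k) - h (x k + s k))
         (ereal (phi_m (fh0 k) (gh k) (Bf (x k)) 0) + psi (x k) 0
            - (ereal (phi_m (fh0 k) (gh k) (Bf (x k)) (s k)) + psi (x k) (s k)))"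
    and x_update: "\<And>k. x (Suc k) = (if rho k \<ge> eta1 then x k + s k else x k)"
    and sigma_update: "\<And>k. \<exists>sg.
         (rho k \<ge> eta2 \<longrightarrow> gam3 * sigma k \<le> sg \<and> sg \<le> sigma k)
       \<and> (eta1 \<le> rho k \<and> rho k < eta2 \<longrightarrow> sigma k \<le> sg \<and> sg \<le> gam1 * sigma k)
       \<and> (rho k < eta1 \<longrightarrow> gam1 * sigma k \<le> sg \<and> sg \<le> gam2 * sigma k)
       \<and> sigma (Suc k) = max sg sigmin"
    and A1: "\<exists>L\<ge>0. \<forall>y v. \<bar>f (y + v) - f y - inner (gradf y) v\<bar> \<le> L / 2 * (norm v)\<^sup>2"
    and A2: "\<exists>kB>0. \<forall>k. spec_norm (Bf (x k)) \<le> kB"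
    and A3: "\<exists>kh>0. \<forall>y v. (psi y v = \<infinity> \<longleftrightarrow> h (y + v) = \<infinity>) \<and>
               (psi y v \<noteq> \<infinity> \<longrightarrow>
                  \<bar>real_of_ereal (psi y v) - real_of_ereal (h (y + v))\<bar> \<le> kh * (norm v)\<^sup>2)"
    and A4: "\<And>k. ereal (phi_m (fh0 k) (gh k) (Bf (x k)) 0) + psi (x k) 0
               - (ereal (phi_m (fh0 k) (gh k) (Bf (x k)) (s k)) + psi (x k) (s k))
             \<ge> ereal (1 - th1) * xicp k"
    and A5: "\<exists>ks. 0 < ks \<and> ks \<le> 1 \<and> (\<forall>k.
               argmin_set (m_cp (fh0 k) (gh k) (psi (x k)) (1 / nu k)) \<noteq> {} \<and>
               norm (shcp k) \<ge> ks * Inf (norm ` argmin_set (m_cp (fh0 k) (gh k) (psi (x k)) (1 / nu k))))"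
    and A6: "\<And>k. \<bar>f (x k) - fh0 k\<bar> \<le> kf * (norm (s k))\<^sup>2"
            "\<And>k. \<bar>f (x k + s k) - fh1 k\<bar> \<le> kf * (norm (s k))\<^sup>2"
            "\<And>k. norm (gradf (x k) - gh k) \<le> kg * norm (s k)"
    and A7: "\<exists>low. \<forall>y. ereal low \<le> ereal (f y) + h y"
  shows "\<exists>N. infinite N \<and> (\<exists>scp u.
           (\<forall>k\<in>N. scp k \<in> argmin_set (m_cp (fh0 k) (gh k) (psi (x k)) (1 / nu k))
                  \<and> u k \<in> (\<lambda>w. gradf (x k) + w) ` limiting_subdiff (psi (x k)) (scp k))
         \<and> (shcp \<longlongrightarrow> 0) (inf sequentially (principal N))
         \<and> (scp \<longlongrightarrow> 0) (inf sequentially (principal N))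
         \<and> (s \<longlongrightarrow> 0) (inf sequentially (principal N))
         \<and> (u \<longlongrightarrow> 0) (inf sequentially (principal N)))"
proof -
  interpret ir2n_iteration f gradf h psi Bf x sigma nu rho fh0 fh1 gh shcp s xicp
      kf kg gam1 gam2 gam3 eta1 eta2 th1 th2 sigmin
    by unfold_locales (fact assms)+
  obtain ks scp where "0 < ks"
    and scp_argmin: "\<And>k. scp k \<in> argmin_set (m_cp (fh0 k) (gh k) (psi (x k)) (1 / nu k))"
    and scp_le: "\<And>k. norm (scp k) \<le> norm (shcp k) / ks + nu k / (real k + 1)"
    using exact_cauchy_steps by blast
  define u where "u k = gradf (x k) - gh k - (1 / nu k) *\<^sub>R scp k" for k
  obtain N where "infinite N" and criticality_lim: "(criticality \<longlongrightarrow> 0) (inf sequentially (principal N))"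
    using criticality_nonneg criticality_frequently_small
    by (rule frequently_small_tendsto_zero_on_infinite_set)
  show ?thesis
  proof (intro exI conjI)
    show "infinite N" by fact
    show "\<forall>k\<in>N. scp k \<in> argmin_set (m_cp (fh0 k) (gh k) (psi (x k)) (1 / nu k))
           \<and> u k \<in> (\<lambda>w. gradf (x k) + w) ` limiting_subdiff (psi (x k)) (scp k)"
      unfolding u_def using scp_argmin exact_cauchy_step_residual_subgradient[OF scp_argmin] by blast
    have "norm (shcp k) \<le> 1 * criticality k" for k
      using norm_cauchy_step_le_criticality by simp
    then show "(shcp \<longlongrightarrow> 0) (inf sequentially (principal N))"
      using criticality_lim by (rule tendsto_zero_if_norm_le_mult)
    show "(scp \<longlongrightarrow> 0) (inf sequentially (principal N))"
      using exact_cauchy_step_norm_le_criticality[OF \<open>0 < ks\<close> scp_le] criticality_lim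
      by (rule tendsto_zero_if_norm_le_mult)
    show "(s \<longlongrightarrow> 0) (inf sequentially (principal N))"
      using norm_step_le_criticality criticality_lim by (rule tendsto_zero_if_norm_le_mult)
    show "(u \<longlongrightarrow> 0) (inf sequentially (principal N))"
      using residual_norm_le_criticality[OF \<open>0 < ks\<close> scp_le] criticality_lim unfolding u_def[symmetric]
      by (rule tendsto_zero_if_norm_le_mult)
  qed
qed

end
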